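(* Assume $n\ge3$. Let $|\Psi^{\mathrm h}_0\rangle$ and $|\Psi^{\mathrm c}_0\rangle$ be initial states with $p^{\mathrm h}_0(0)>0$, $p^{\mathrm c}_0(0)>0$, $D_I^{\mathrm h}(0)>D_I^{\mathrm c}(0)$, and additionally $p^{\mathrm h}_i(0)=0$ for all $i>2$ and $p^{\mathrm c}_j(0)=0$ for all $j>1$. With $r^{\mathrm h},r^{\mathrm c},s^{\mathrm h}$ as defined in the context, and $\epsilon>0$, the Mpemba effect with respect to $D_I$ occurs before the threshold $\epsilon$ if and only if $r^{\mathrm h}<r^{\mathrm c}$ and $$\epsilon<\left(1+\frac{1}{r^{\mathrm c}}\left(\frac{s^{\mathrm h}-r^{\mathrm h}}{r^{\mathrm c}-r^{\mathrm h}}\right)^{\frac{E_1}{E_2-E_1}}\right)^{-1}.$$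
   Context: Let $H$ be a Hamiltonian on an $n$-dimensional Hilbert space with nondegenerate eigenvalues $0=E_0<E_1<\dots<E_{n-1}$ and orthonormal eigenvectors $|E_i\rangle$. QITE of a pure state $|\Psi_0\rangle$ is $|\Psi(\tau)\rangle=e^{-H\tau}|\Psi_0\rangle/\sqrt{\langle\Psi_0|e^{-2H\tau}|\Psi_0\rangle}$, with populations $p_i(\tau)=|\langle E_i|\Psi(\tau)\rangle|^2=p_i(0)e^{-2E_i\tau}/\sum_j p_j(0)e^{-2E_j\tau}$, and ground-state infidelity $D_I(\tau)=1-p_0(\tau)$. Superscripts $\mathrm h,\mathrm c$ refer to the trajectories from $|\Psi^{\mathrm h}_0\rangle$, $|\Psi^{\mathrm c}_0\rangle$. Define $r^{\mathrm h}=p^{\mathrm h}_1(0)/p^{\mathrm h}_0(0)$, $r^{\mathrm c}=p^{\mathrm c}_1(0)/p^{\mathrm c}_0(0)$, $s^{\mathrm h}=(1-p^{\mathrm h}_0(0))/p^{\mathrm h}_0(0)$. "The Mpemba effect occurs before the threshold $\epsilon$" means: there exists $\tau^\star>0$ with $D_I^{\mathrm h}(\tau^\star)=D_I^{\mathrm c}(\tau^\star)>\epsilon$ and $D_I^{\mathrm h}(\tau)<D_I^{\mathrm c}(\tau)$ for all $\tau>\tau^\star$. *)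

theory Defs
  imports Complex_Main
begin

text \<open>The Hamiltonian H on an n-dimensional Hilbert space is represented by its
  eigenvalues E 0, ..., E (n-1) (eigenvectors |E_i> form an orthonormal basis).
  A pure state is represented by its amplitudes c i = <E_i|Psi_0> in that basis.\<close>

definition is_state :: "nat \<Rightarrow> (nat \<Rightarrow> complex) \<Rightarrow> bool" where
  "is_state n c \<longleftrightarrow> (\<Sum>i<n. (cmod (c i))\<^sup>2) = 1"

definition pop :: "nat \<Rightarrow> (nat \<Rightarrow> real) \<Rightarrow> (nat \<Rightarrow> complex) \<Rightarrow> real \<Rightarrow> nat \<Rightarrow> real" where
  "pop n E c \<tau> i =
     (cmod (c i))\<^sup>2 * exp (-2 * E i * \<tau>) / (\<Sum>j<n. (cmod (c j))\<^sup>2 * exp (-2 * E j * \<tau>))"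

definition DI :: "nat \<Rightarrow> (nat \<Rightarrow> real) \<Rightarrow> (nat \<Rightarrow> complex) \<Rightarrow> real \<Rightarrow> real" where
  "DI n E c \<tau> = 1 - pop n E c \<tau> 0"

definition mpemba_before ::
  "nat \<Rightarrow> (nat \<Rightarrow> real) \<Rightarrow> (nat \<Rightarrow> complex) \<Rightarrow> (nat \<Rightarrow> complex) \<Rightarrow> real \<Rightarrow> bool" where
  "mpemba_before n E ch cc \<epsilon> \<longleftrightarrow>
     (\<exists>\<tau>s>0. DI n E ch \<tau>s = DI n E cc \<tau>s \<and> DI n E ch \<tau>s > \<epsilon> \<and>
             (\<forall>\<tau>>\<tau>s. DI n E ch \<tau> < DI n E cc \<tau>))"

end

theory Submission
  imports Defs
begin

text \<open>Write \<open>a i\<close>, \<open>b i\<close> for the initial populations of the hot and the cold state. Both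
  infidelities are rational in \<open>exp (-2 E\<^sub>1 \<tau>)\<close> and \<open>exp (-2 E\<^sub>2 \<tau>)\<close>, and clearing denominators
  shows that \<open>D\<^sub>h - D\<^sub>c\<close> has the sign of \<open>L exp (-c \<tau>) - K\<close>, where \<open>K = a 0 b 1 - b 0 a 1\<close>,
  \<open>L = b 0 a 2\<close> and \<open>c = 2 (E\<^sub>2 - E\<^sub>1)\<close>. The hot state starting farther away means \<open>K < L\<close>.
  If \<open>K \<le> 0\<close> the hot trajectory is never strictly closer to the ground state; if \<open>K > 0\<close>, which is
  \<open>r\<^sup>h < r\<^sup>c\<close>, the infidelities cross exactly once, at \<open>\<tau>\<^sup>\<star> = ln (L/K) / c\<close>, with the hot one below
  afterwards. Since \<open>(s\<^sup>h - r\<^sup>h) / (r\<^sup>c - r\<^sup>h) = L/K\<close>, the common value \<open>D\<^sub>c \<tau>\<^sup>\<star>\<close> is the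
  threshold of the theorem.\<close>

lemma pop_nonneg: "0 \<le> pop n E c \<tau> i"
  by (simp add: pop_def sum_nonneg)

lemma pop_initial:
  assumes "is_state n c"
  shows "pop n E c 0 i = (cmod (c i))\<^sup>2"
  using assms by (simp add: pop_def is_state_def)

lemma sum_pop_initial:
  assumes "is_state n c" "k \<le> n" "\<And>i. k \<le> i \<Longrightarrow> i < n \<Longrightarrow> pop n E c 0 i = 0"
  shows "(\<Sum>i<k. pop n E c 0 i) = 1"
proof -
  have "(\<Sum>i<n. pop n E c 0 i) = (\<Sum>i<k. pop n E c 0 i)"
    by (rule sum.mono_neutral_right) (use assms(2,3) in auto)
  moreover have "(\<Sum>i<n. pop n E c 0 i) = 1"
    using assms(1) by (simp add: pop_initial is_state_def)
  ultimately show ?thesis by simp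
qed

lemma DI_supported:
  assumes "is_state n c" "E 0 = 0" "k \<le> n" "\<And>i. k \<le> i \<Longrightarrow> i < n \<Longrightarrow> pop n E c 0 i = 0"
  shows "DI n E c \<tau> = 1 - pop n E c 0 0 / (\<Sum>j<k. pop n E c 0 j * exp (-2 * E j * \<tau>))"
proof -
  have "(\<Sum>j<n. (cmod (c j))\<^sup>2 * exp (-2 * E j * \<tau>)) = (\<Sum>j<n. pop n E c 0 j * exp (-2 * E j * \<tau>))"
    using assms(1) by (simp add: pop_initial)
  also have "\<dots> = (\<Sum>j<k. pop n E c 0 j * exp (-2 * E j * \<tau>))"
    by (rule sum.mono_neutral_right) (use assms(3,4) in auto)
  finally show ?thesis
    using assms(1,2) by (simp add: DI_def pop_def[of n E c \<tau>] pop_initial)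
qed

lemma sgn_DI_diff:
  assumes "n \<ge> 3" "E 0 = 0" "is_state n ch" "is_state n cc"
    and "\<And>i. 2 < i \<Longrightarrow> i < n \<Longrightarrow> pop n E ch 0 i = 0"
    and "\<And>j. 1 < j \<Longrightarrow> j < n \<Longrightarrow> pop n E cc 0 j = 0"
    and "0 < pop n E ch 0 0" "0 < pop n E cc 0 0"
  defines "a \<equiv> pop n E ch 0" and "b \<equiv> pop n E cc 0"
  shows "sgn (DI n E ch \<tau> - DI n E cc \<tau>)
    = sgn (b 0 * a 2 * exp (- 2 * (E 2 - E 1) * \<tau>) - (a 0 * b 1 - b 0 * a 1))"
proof -
  define x where "x = exp (- 2 * E 1 * \<tau>)"
  define e where "e = exp (- 2 * (E 2 - E 1) * \<tau>)"
  define Sh where "Sh = a 0 + a 1 * x + a 2 * e * x"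
  define Sc where "Sc = b 0 + b 1 * x"
  have "x > 0" "e > 0" by (simp_all add: x_def e_def)
  moreover have "a i \<ge> 0" "b i \<ge> 0" for i by (simp_all add: a_def b_def pop_nonneg)
  ultimately have "Sh > 0" "Sc > 0"
    using assms(7,8)[folded a_def b_def] by (simp_all add: Sh_def Sc_def add_pos_nonneg)
  have "exp (- 2 * E 2 * \<tau>) = e * x"
    by (simp add: x_def e_def exp_add[symmetric] algebra_simps)
  moreover have "DI n E ch \<tau> = 1 - a 0 / (\<Sum>j<3. a j * exp (-2 * E j * \<tau>))"
    unfolding a_def by (rule DI_supported) (use assms(1-3,5) in auto)
  moreover have "DI n E cc \<tau> = 1 - b 0 / (\<Sum>j<2. b j * exp (-2 * E j * \<tau>))"
    unfolding b_def by (rule DI_supported) (use assms(1,2,4,6) in auto)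
  ultimately have "DI n E ch \<tau> - DI n E cc \<tau> = b 0 / Sc - a 0 / Sh"
    by (simp add: eval_nat_numeral Sh_def Sc_def x_def assms(2))
  also have "\<dots> = x * (b 0 * a 2 * e - (a 0 * b 1 - b 0 * a 1)) / (Sh * Sc)"
    using \<open>Sh > 0\<close> \<open>Sc > 0\<close> by (simp add: field_simps Sh_def Sc_def)
  finally show ?thesis
    using \<open>x > 0\<close> \<open>Sh > 0\<close> \<open>Sc > 0\<close> by (simp add: sgn_mult e_def)
qed

lemma sgn_exp_minus_one: "sgn (exp u - 1) = sgn (u :: real)"
  by (rule linorder_cases[of u 0]) simp_all

lemma sgn_exp_decay_crossing:
  fixes c K L :: real
  assumes "0 < c" "0 < K" "0 < L"
  shows "sgn (L * exp (- c * \<tau>) - K) = sgn (ln (L / K) / c - \<tau>)"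
proof -
  have "c * (ln (L / K) / c - \<tau>) = ln (L / K) - c * \<tau>"
    using assms(1) by (simp add: field_simps)
  then have "exp (c * (ln (L / K) / c - \<tau>)) = L / K * exp (- c * \<tau>)"
    using assms by (simp add: exp_diff exp_minus divide_inverse)
  then have "L * exp (- c * \<tau>) - K = K * (exp (c * (ln (L / K) / c - \<tau>)) - 1)"
    using assms by (simp add: algebra_simps)
  then show ?thesis
    using assms by (simp add: sgn_mult sgn_exp_minus_one)
qed

lemma mpemba_before_iff_sign_change:
  assumes "0 < \<tau>0" and sign: "\<And>\<tau>. sgn (DI n E ch \<tau> - DI n E cc \<tau>) = sgn (\<tau>0 - \<tau>)"
  shows "mpemba_before n E ch cc \<epsilon> \<longleftrightarrow> \<epsilon> < DI n E cc \<tau>0"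
proof -
  have equal: "DI n E ch \<tau> = DI n E cc \<tau> \<longleftrightarrow> \<tau> = \<tau>0" for \<tau>
    using sign[of \<tau>] by (auto simp: sgn_0_0)
  have below: "DI n E ch \<tau> < DI n E cc \<tau>" if "\<tau>0 < \<tau>" for \<tau>
    using sign[of \<tau>] that by (simp add: sgn_1_neg)
  show ?thesis
  proof
    assume "mpemba_before n E ch cc \<epsilon>"
    then obtain \<tau>s where "DI n E ch \<tau>s = DI n E cc \<tau>s" "\<epsilon> < DI n E ch \<tau>s"
      unfolding mpemba_before_def by blast
    then show "\<epsilon> < DI n E cc \<tau>0"
      using equal by metis
  next
    assume "\<epsilon> < DI n E cc \<tau>0"
    moreover have "DI n E ch \<tau>0 = DI n E cc \<tau>0"
      using equal by simp
    ultimately show "mpemba_before n E ch cc \<epsilon>"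
      unfolding mpemba_before_def using assms(1) below by auto
  qed
qed

lemma not_mpemba_before:
  assumes "\<And>\<tau>. 0 < \<tau> \<Longrightarrow> DI n E cc \<tau> \<le> DI n E ch \<tau>"
  shows "\<not> mpemba_before n E ch cc \<epsilon>"
  unfolding mpemba_before_def using assms by (meson gt_ex not_le order.strict_trans)

lemma mpemba_before_iff_exp_gap:
  fixes c K L :: real
  assumes "0 < c" "K < L" "0 \<le> L"
    and gap: "\<And>\<tau>. sgn (DI n E ch \<tau> - DI n E cc \<tau>) = sgn (L * exp (- c * \<tau>) - K)"
  shows "mpemba_before n E ch cc \<epsilon> \<longleftrightarrow> 0 < K \<and> \<epsilon> < DI n E cc (ln (L / K) / c)"
proof (cases "0 < K")
  case True
  then have "0 < ln (L / K) / c"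
    using assms(1,2) by simp
  moreover have "sgn (DI n E ch \<tau> - DI n E cc \<tau>) = sgn (ln (L / K) / c - \<tau>)" for \<tau>
    using gap sgn_exp_decay_crossing[OF assms(1) True] True assms(2) by simp
  ultimately show ?thesis
    using True by (simp add: mpemba_before_iff_sign_change)
next
  case False
  have "DI n E cc \<tau> \<le> DI n E ch \<tau>" for \<tau>
  proof -
    have "0 \<le> L * exp (- c * \<tau>)"
      using assms(3) by simp
    then have "0 \<le> L * exp (- c * \<tau>) - K"
      using False by simp
    then show ?thesis
      using gap[of \<tau>] by (metis diff_ge_0_iff_ge not_le sgn_1_neg)
  qed
  then show ?thesis
    using False not_mpemba_before by blast
qed

lemma DI_two_level:
  assumes "n \<ge> 2" "E 0 = 0" "is_state n c" "\<And>j. 1 < j \<Longrightarrow> j < n \<Longrightarrow> pop n E c 0 j = 0"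
    and "0 < pop n E c 0 0" "0 < pop n E c 0 1"
  shows "DI n E c \<tau> = inverse (1 + pop n E c 0 0 / pop n E c 0 1 * exp (2 * E 1 * \<tau>))"
proof -
  define X where "X = exp (2 * E 1 * \<tau>)"
  have "0 < X" by (simp add: X_def)
  have "DI n E c \<tau> = 1 - pop n E c 0 0 / (\<Sum>j<2. pop n E c 0 j * exp (-2 * E j * \<tau>))"
    by (rule DI_supported) (use assms(1-4) in auto)
  also have "\<dots> = 1 - pop n E c 0 0 / (pop n E c 0 0 + pop n E c 0 1 / X)"
    using assms(2) by (simp add: eval_nat_numeral exp_minus divide_inverse X_def)
  also have "\<dots> = inverse (1 + pop n E c 0 0 / pop n E c 0 1 * X)"
    using assms(5,6) \<open>0 < X\<close> by (simp add: field_simps add_nonneg_eq_0_iff add_divide_distrib[symmetric])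
  finally show ?thesis by (simp add: X_def)
qed

lemma threshold_condition_iff:
  fixes a0 a1 a2 b0 b1 \<beta> \<epsilon> :: real
  assumes "0 < a0" "0 < b0" "a0 + a1 + a2 = 1"
  shows "(let rh = a1 / a0; rc = b1 / b0; s = (1 - a0) / a0
          in rh < rc \<and> \<epsilon> < inverse (1 + (1 / rc) * ((s - rh) / (rc - rh)) powr \<beta>))
    \<longleftrightarrow> 0 < a0 * b1 - b0 * a1
        \<and> \<epsilon> < inverse (1 + b0 / b1 * (b0 * a2 / (a0 * b1 - b0 * a1)) powr \<beta>)"
proof -
  have "a1 / a0 < b1 / b0 \<longleftrightarrow> 0 < a0 * b1 - b0 * a1"
    using assms(1,2) by (simp add: field_simps)
  moreover have "(1 - a0) / a0 - a1 / a0 = a2 / a0"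
    using assms(3) by (simp add: diff_divide_distrib[symmetric])
  moreover have "b1 / b0 - a1 / a0 = (a0 * b1 - b0 * a1) / (a0 * b0)"
    using assms(1,2) by (simp add: field_simps)
  moreover have "a2 / a0 / ((a0 * b1 - b0 * a1) / (a0 * b0)) = b0 * a2 / (a0 * b1 - b0 * a1)"
    using assms(1) by simp
  ultimately show ?thesis
    using assms(1,2) by (simp add: Let_def ac_simps)
qed

theorem mainTheorem3:
  fixes n :: nat and E :: "nat \<Rightarrow> real" and ch cc :: "nat \<Rightarrow> complex" and \<epsilon> :: real
  assumes n3: "n \<ge> 3"
    and E0: "E 0 = 0"
    and Emono: "\<And>i j. i < j \<Longrightarrow> j < n \<Longrightarrow> E i < E j"
    and sh: "is_state n ch" and sc: "is_state n cc"
    and ph0: "pop n E ch 0 0 > 0" and pc0: "pop n E cc 0 0 > 0"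
    and hot: "DI n E ch 0 > DI n E cc 0"
    and hsupp: "\<And>i. 2 < i \<Longrightarrow> i < n \<Longrightarrow> pop n E ch 0 i = 0"
    and csupp: "\<And>j. 1 < j \<Longrightarrow> j < n \<Longrightarrow> pop n E cc 0 j = 0"
    and eps: "\<epsilon> > 0"
  shows "mpemba_before n E ch cc \<epsilon> \<longleftrightarrow>
    (let rh = pop n E ch 0 1 / pop n E ch 0 0;
         rc = pop n E cc 0 1 / pop n E cc 0 0;
         s = (1 - pop n E ch 0 0) / pop n E ch 0 0
     in rh < rc \<and>
        \<epsilon> < inverse (1 + (1 / rc) * ((s - rh) / (rc - rh)) powr (E 1 / (E 2 - E 1))))"
proof -
  define a where "a = pop n E ch 0"
  define b where "b = pop n E cc 0"
  define K where "K = a 0 * b 1 - b 0 * a 1"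
  define L where "L = b 0 * a 2"
  define c where "c = 2 * (E 2 - E 1)"
  have "0 < c"
    using Emono[of 1 2] n3 by (simp add: c_def)
  have gap: "sgn (DI n E ch \<tau> - DI n E cc \<tau>) = sgn (L * exp (- c * \<tau>) - K)" for \<tau>
    using sgn_DI_diff[OF n3 E0 sh sc hsupp csupp ph0 pc0] by (simp add: a_def b_def K_def L_def c_def)
  have "K < L"
    using gap[of 0] hot by (simp add: sgn_1_pos)
  have "0 \<le> L"
    by (simp add: L_def a_def b_def pop_nonneg)
  have DI_crossing: "DI n E cc (ln (L / K) / c) = inverse (1 + b 0 / b 1 * (L / K) powr (E 1 / (E 2 - E 1)))"
    if "0 < K"
  proof -
    have "0 \<le> b 0 * a 1"
      by (simp add: a_def b_def pop_nonneg)
    then have "0 < a 0 * b 1"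
      using that by (simp add: K_def)
    then have "0 < b 1"
      using ph0 by (simp add: a_def zero_less_mult_iff)
    moreover have "exp (2 * E 1 * (ln (L / K) / c)) = (L / K) powr (E 1 / (E 2 - E 1))"
      using that \<open>K < L\<close> \<open>0 < c\<close> by (simp add: c_def powr_def field_simps)
    ultimately show ?thesis
      using DI_two_level[OF _ E0 sc csupp pc0] n3 by (simp add: b_def)
  qed
  have "a 0 + a 1 + a 2 = 1"
    using sum_pop_initial[OF sh, of 3] n3 hsupp by (simp add: a_def eval_nat_numeral)
  then show ?thesis
    using mpemba_before_iff_exp_gap[OF \<open>0 < c\<close> \<open>K < L\<close> \<open>0 \<le> L\<close> gap] DI_crossing
      threshold_condition_iff[of "a 0" "b 0" "a 1" "a 2"] ph0 pc0
    by (auto simp: a_def b_def K_def L_def)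
qed

end
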